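(* Let $k\in\mathbb{N}$. For every $\mathbf{f}=(f_1,f_2)\in (C^\infty[-1,1])^2$, \[ \operatorname{Re}\langle\tilde{\mathbf{L}}_\square\mathbf{f},\mathbf{f}\rangle_k\le-\frac12\|\mathbf{f}\|_k^2, \] where $\tilde{\mathbf{L}}_\square\mathbf{f}=\big(f_2-yf_1'-f_1(-1),\ -f_2-yf_2'+f_1''\big)$.
   Context: Sesquilinear forms on pairs of functions on $[-1,1]$: $\langle\mathbf{f},\mathbf{g}\rangle_0:=f_1(-1)\overline{g_1(-1)}+\langle f_1,g_1\rangle_{\dot H^1(-1,1)}+\langle f_2,g_2\rangle_{L^2(-1,1)}$ and $\langle\mathbf{f},\mathbf{g}\rangle_k:=\langle\mathbf{f},\mathbf{g}\rangle_0+\langle f_1,g_1\rangle_{\dot H^{k+1}(-1,1)}+\langle f_2,g_2\rangle_{\dot H^k(-1,1)}$, with $\|\mathbf{f}\|_k^2=\langle\mathbf{f},\mathbf{f}\rangle_k$. Here $f_1(-1)$ in the first component of $\tilde{\mathbf{L}}_\square\mathbf{f}$ denotes the constant function. *)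

theory Defs
  imports "HOL-Analysis.Analysis"
begin

fun nderiv :: "nat \<Rightarrow> (real \<Rightarrow> complex) \<Rightarrow> real \<Rightarrow> complex" where
  "nderiv 0 g = g"
| "nderiv (Suc n) g = (\<lambda>y. vector_derivative (nderiv n g) (at y within {-1..1}))"

definition smooth_on_I :: "(real \<Rightarrow> complex) \<Rightarrow> bool" where
  "smooth_on_I g \<longleftrightarrow> (\<forall>n. \<forall>y\<in>{-1..1}. nderiv n g differentiable (at y within {-1..1}))"

definition Hdot_inner :: "nat \<Rightarrow> (real \<Rightarrow> complex) \<Rightarrow> (real \<Rightarrow> complex) \<Rightarrow> complex" where
  "Hdot_inner m f g = integral {-1..1} (\<lambda>y. nderiv m f y * cnj (nderiv m g y))"

definition inner0 :: "(real \<Rightarrow> complex) \<times> (real \<Rightarrow> complex) \<Rightarrow> (real \<Rightarrow> complex) \<times> (real \<Rightarrow> complex) \<Rightarrow> complex" where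
  "inner0 f g = fst f (-1) * cnj (fst g (-1)) + Hdot_inner 1 (fst f) (fst g) + Hdot_inner 0 (snd f) (snd g)"

definition innerk :: "nat \<Rightarrow> (real \<Rightarrow> complex) \<times> (real \<Rightarrow> complex) \<Rightarrow> (real \<Rightarrow> complex) \<times> (real \<Rightarrow> complex) \<Rightarrow> complex" where
  "innerk k f g = inner0 f g + Hdot_inner (k+1) (fst f) (fst g) + Hdot_inner k (snd f) (snd g)"

definition normk :: "nat \<Rightarrow> (real \<Rightarrow> complex) \<times> (real \<Rightarrow> complex) \<Rightarrow> real" where
  "normk k f = sqrt (Re (innerk k f f))"

definition Lsq :: "(real \<Rightarrow> complex) \<times> (real \<Rightarrow> complex) \<Rightarrow> (real \<Rightarrow> complex) \<times> (real \<Rightarrow> complex)" where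
  "Lsq f = ((\<lambda>y. snd f y - complex_of_real y * nderiv 1 (fst f) y - fst f (-1)),
            (\<lambda>y. - snd f y - complex_of_real y * nderiv 1 (snd f) y + nderiv 2 (fst f) y))"

end

theory Submission
  imports Defs
begin

text \<open>Differentiating the first component of \<open>\<tilde>L\<^sub>\<box>f\<close> \<open>m\<close> times and the second one
  \<open>m - 1\<close> times gives the transport system \<open>(v' - y u' - m u, u' - y v' - m v)\<close> in
  \<open>u = \<partial>\<^sup>m f\<^sub>1\<close>, \<open>v = \<partial>\<^sup>m\<^sup>-\<^sup>1 f\<^sub>2\<close>. Pairing it with \<open>(u, v)\<close> and integrating by parts
  yields the bulk term \<open>-(m - 1/2) (\<parallel>u\<parallel>\<^sup>2 + \<parallel>v\<parallel>\<^sup>2)\<close> and the boundary terms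
  \<open>-|u - v|\<^sup>2/2\<close> at \<open>y = 1\<close> and \<open>-|u + v|\<^sup>2/2\<close> at \<open>y = -1\<close>. The form \<open>\<langle>\<cdot>,\<cdot>\<rangle>\<^sub>k\<close>
  consists of the levels \<open>m = 1\<close> and \<open>m = k + 1\<close> and a point evaluation at \<open>-1\<close>. There
  the first component of \<open>\<tilde>L\<^sub>\<box>f\<close> equals \<open>u + v - f\<^sub>1(-1)\<close> (level \<open>m = 1\<close>), so the
  boundary term \<open>-|u + v|\<^sup>2/2\<close> absorbs the point term and leaves \<open>-|f\<^sub>1(-1)|\<^sup>2/2\<close>.\<close>

declare nderiv.simps(2) [simp del]

lemma has_vector_derivative_nderiv:
  assumes "smooth_on_I g" "y \<in> {-1..1}"
  shows "(nderiv n g has_vector_derivative nderiv (Suc n) g y) (at y within {-1..1})"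
  using assms unfolding smooth_on_I_def by (simp add: nderiv.simps(2) vector_derivative_works[symmetric])

lemma continuous_on_nderiv:
  assumes "smooth_on_I g"
  shows "continuous_on {-1..1} (nderiv n g)"
  using assms unfolding smooth_on_I_def
  by (meson continuous_on_eq_continuous_within differentiable_imp_continuous_within)

lemma nderiv_eqI:
  assumes "\<And>y. y \<in> {-1..1} \<Longrightarrow> h y = F 0 y"
    and "\<And>j y. y \<in> {-1..1} \<Longrightarrow> (F j has_vector_derivative F (Suc j) y) (at y within {-1..1})"
    and "y \<in> {-1..1}"
  shows "nderiv n h y = F n y"
  using assms(3)
proof (induction n arbitrary: y)
  case 0
  then show ?case using assms(1) by simp
next
  case (Suc n)
  have "(nderiv n h has_vector_derivative F (Suc n) y) (at y within {-1..1})"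
    by (rule has_vector_derivative_transform_within[OF assms(2)[OF Suc.prems], where d=1])
       (use Suc in auto)
  then show ?case
    using vector_derivative_within_closed_interval[of "-1" 1 y] Suc.prems by (simp add: nderiv.simps(2))
qed

text \<open>The commutator rule \<open>\<partial>\<^sup>n (y \<partial>) = y \<partial>\<^sup>n\<^sup>+\<^sup>1 + n \<partial>\<^sup>n\<close>.\<close>
lemma nderiv_minus_dilation:
  assumes f: "smooth_on_I f"
    and H: "\<And>j y. y \<in> {-1..1} \<Longrightarrow> (H j has_vector_derivative H (Suc j) y) (at y within {-1..1})"
    and y: "y \<in> {-1..1}"
  shows "nderiv n (\<lambda>y. H 0 y - of_real y * nderiv 1 f y) y
       = H n y - of_real y * nderiv (Suc n) f y - of_nat n * nderiv n f y"
proof (rule nderiv_eqI[where F = "\<lambda>j y. H j y - of_real y * nderiv (Suc j) f y - of_nat j * nderiv j f y"])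
  fix j and x :: real
  assume x: "x \<in> {-1..1}"
  have ident: "((\<lambda>y. complex_of_real y) has_vector_derivative 1) (at x within {-1..1})"
    using has_vector_derivative_of_real[OF DERIV_ident] by simp
  have "((\<lambda>y. H j y - of_real y * nderiv (Suc j) f y - of_nat j * nderiv j f y) has_vector_derivative
      H (Suc j) x - (of_real x * nderiv (Suc (Suc j)) f x + 1 * nderiv (Suc j) f x)
        - of_nat j * nderiv (Suc j) f x) (at x within {-1..1})"
    by (intro has_vector_derivative_diff has_vector_derivative_mult has_vector_derivative_mult_right
        ident H x has_vector_derivative_nderiv f)
  then show "((\<lambda>y. H j y - of_real y * nderiv (Suc j) f y - of_nat j * nderiv j f y) has_vector_derivative
      H (Suc j) x - of_real x * nderiv (Suc (Suc j)) f x - of_nat (Suc j) * nderiv (Suc j) f x)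
      (at x within {-1..1})"
    by (rule has_vector_derivative_eq_rhs) (simp add: algebra_simps)
qed (use y in auto)

lemma Hdot_inner_nderiv: "Hdot_inner m f g = Hdot_inner 0 (nderiv m f) (nderiv m g)"
  by (simp add: Hdot_inner_def)

lemma has_integral_Re_Hdot_inner_self:
  assumes "continuous_on {-1..1} w"
  shows "((\<lambda>y. Re (w y * cnj (w y))) has_integral Re (Hdot_inner 0 w w)) {-1..1}"
  unfolding Hdot_inner_def nderiv.simps
  by (intro has_integral_Re integrable_integral integrable_continuous_interval continuous_intros assms)

lemma Re_Hdot_inner_self_nonneg:
  assumes "smooth_on_I f"
  shows "0 \<le> Re (Hdot_inner m f f)"
  unfolding Hdot_inner_nderiv[of m f]
  using has_integral_Re_Hdot_inner_self[OF continuous_on_nderiv[OF assms]] by (rule has_integral_nonneg) simp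

text \<open>The integrand is the derivative of \<open>K = Re (u v\<^sup>*) - y (|u|\<^sup>2 + |v|\<^sup>2) / 2\<close> minus
  \<open>(c - 1/2) (|u|\<^sup>2 + |v|\<^sup>2)\<close>.\<close>
lemma transport_energy_identity:
  fixes u v u' v' :: "real \<Rightarrow> complex" and c :: real
  assumes u: "\<And>y. y \<in> {-1..1} \<Longrightarrow> (u has_vector_derivative u' y) (at y within {-1..1})"
    and v: "\<And>y. y \<in> {-1..1} \<Longrightarrow> (v has_vector_derivative v' y) (at y within {-1..1})"
    and u': "continuous_on {-1..1} u'" and v': "continuous_on {-1..1} v'"
  shows "Re (Hdot_inner 0 (\<lambda>y. v' y - of_real y * u' y - of_real c * u y) u)
       + Re (Hdot_inner 0 (\<lambda>y. u' y - of_real y * v' y - of_real c * v y) v)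
       = - (cmod (u 1 - v 1))\<^sup>2 / 2 - (cmod (u (-1) + v (-1)))\<^sup>2 / 2
         - (c - 1/2) * (Re (Hdot_inner 0 u u) + Re (Hdot_inner 0 v v))"
proof -
  define K where "K y = u y * cnj (v y) - of_real (y / 2) * (u y * cnj (u y) + v y * cnj (v y))" for y
  define K' where "K' y = u' y * cnj (v y) + u y * cnj (v' y) - 1/2 * (u y * cnj (u y) + v y * cnj (v y))
      - of_real y / 2 * (u' y * cnj (u y) + u y * cnj (u' y) + v' y * cnj (v y) + v y * cnj (v' y))" for y
  have "(K has_vector_derivative K' y) (at y within {-1..1})" if y: "y \<in> {-1..1}" for y
  proof -
    have half: "((\<lambda>y. complex_of_real (y/2)) has_vector_derivative of_real (1/2)) (at y within {-1..1})"
      by (rule has_vector_derivative_of_real) (auto intro!: derivative_eq_intros)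
    have "(K has_vector_derivative
        (u y * cnj (v' y) + u' y * cnj (v y)) -
        (of_real (y/2) * ((u y * cnj (u' y) + u' y * cnj (u y)) + (v y * cnj (v' y) + v' y * cnj (v y)))
          + of_real (1/2) * (u y * cnj (u y) + v y * cnj (v y)))) (at y within {-1..1})"
      unfolding K_def
      by (intro has_vector_derivative_diff has_vector_derivative_mult has_vector_derivative_add
            has_vector_derivative_cnj u v y half)
    then show ?thesis
      by (rule has_vector_derivative_eq_rhs) (simp add: K'_def algebra_simps)
  qed
  then have "((\<lambda>y. Re (K' y)) has_integral Re (K 1 - K (-1))) {-1..1}"
    by (intro has_integral_Re fundamental_theorem_of_calculus) auto
  moreover have cont: "continuous_on {-1..1} u" "continuous_on {-1..1} v"
    using u v by (meson continuous_on_eq_continuous_within has_vector_derivative_continuous)+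
  ultimately have "((\<lambda>y. Re (K' y) - (c - 1/2) * (Re (u y * cnj (u y)) + Re (v y * cnj (v y))))
      has_integral Re (K 1 - K (-1)) - (c - 1/2) * (Re (Hdot_inner 0 u u) + Re (Hdot_inner 0 v v)))
      {-1..1}"
    by (intro has_integral_diff has_integral_mult_right has_integral_add has_integral_Re_Hdot_inner_self)
  moreover have "(\<lambda>y. Re (K' y) - (c - 1/2) * (Re (u y * cnj (u y)) + Re (v y * cnj (v y))))
      = (\<lambda>y. Re ((v' y - of_real y * u' y - of_real c * u y) * cnj (u y))
            + Re ((u' y - of_real y * v' y - of_real c * v y) * cnj (v y)))"
    by (simp add: K'_def algebra_simps add_divide_distrib)
  moreover have "((\<lambda>y. Re ((v' y - of_real y * u' y - of_real c * u y) * cnj (u y))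
            + Re ((u' y - of_real y * v' y - of_real c * v y) * cnj (v y)))
      has_integral Re (Hdot_inner 0 (\<lambda>y. v' y - of_real y * u' y - of_real c * u y) u)
       + Re (Hdot_inner 0 (\<lambda>y. u' y - of_real y * v' y - of_real c * v y) v)) {-1..1}"
    unfolding Hdot_inner_def nderiv.simps
    by (intro has_integral_add has_integral_Re integrable_integral integrable_continuous_interval
        continuous_intros cont u' v')
  moreover have "Re (K 1 - K (-1)) = - (cmod (u 1 - v 1))\<^sup>2 / 2 - (cmod (u (-1) + v (-1)))\<^sup>2 / 2"
    unfolding K_def cmod_power2 by (simp add: power2_eq_square field_simps)
  ultimately show ?thesis
    using has_integral_unique by (metis (no_types, lifting))
qed

lemma nderiv_Lsq_fst:
  assumes f1: "smooth_on_I f1" and f2: "smooth_on_I f2" and y: "y \<in> {-1..1}"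
  shows "nderiv (Suc n) (fst (Lsq (f1, f2))) y
       = nderiv (Suc n) f2 y - of_real y * nderiv (Suc (Suc n)) f1 y - of_real (n + 1) * nderiv (Suc n) f1 y"
proof -
  define H where "H j y = nderiv j f2 y - (if j = 0 then f1 (-1) else 0)" for j y
  have "(H j has_vector_derivative H (Suc j) x) (at x within {-1..1})" if "x \<in> {-1..1}" for j x
    unfolding H_def[abs_def]
    using has_vector_derivative_diff[OF has_vector_derivative_nderiv[OF f2 that] has_vector_derivative_const]
    by simp
  moreover have "fst (Lsq (f1, f2)) = (\<lambda>y. H 0 y - of_real y * nderiv 1 f1 y)"
    by (auto simp: Lsq_def H_def)
  ultimately show ?thesis
    using nderiv_minus_dilation[OF f1 _ y, of H "Suc n"] by (simp add: H_def)
qed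

lemma nderiv_Lsq_snd:
  assumes f1: "smooth_on_I f1" and f2: "smooth_on_I f2" and y: "y \<in> {-1..1}"
  shows "nderiv n (snd (Lsq (f1, f2))) y
       = nderiv (Suc (Suc n)) f1 y - of_real y * nderiv (Suc n) f2 y - of_real (n + 1) * nderiv n f2 y"
proof -
  define H where "H j y = nderiv (Suc (Suc j)) f1 y - nderiv j f2 y" for j y
  have "(H j has_vector_derivative H (Suc j) x) (at x within {-1..1})" if "x \<in> {-1..1}" for j x
    unfolding H_def[abs_def]
    by (intro has_vector_derivative_diff has_vector_derivative_nderiv f1 f2 that)
  moreover have "snd (Lsq (f1, f2)) = (\<lambda>y. H 0 y - of_real y * nderiv 1 f2 y)"
    by (auto simp: Lsq_def H_def numeral_2_eq_2)
  ultimately show ?thesis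
    using nderiv_minus_dilation[OF f2 _ y, of H n] by (simp add: H_def algebra_simps)
qed

lemma Re_Hdot_inner_Lsq:
  assumes f1: "smooth_on_I f1" and f2: "smooth_on_I f2"
  shows "Re (Hdot_inner (Suc n) (fst (Lsq (f1, f2))) f1) + Re (Hdot_inner n (snd (Lsq (f1, f2))) f2)
       = - (cmod (nderiv (Suc n) f1 1 - nderiv n f2 1))\<^sup>2 / 2
         - (cmod (nderiv (Suc n) f1 (-1) + nderiv n f2 (-1)))\<^sup>2 / 2
         - (n + 1/2) * (Re (Hdot_inner (Suc n) f1 f1) + Re (Hdot_inner n f2 f2))"
proof -
  have "Hdot_inner (Suc n) (fst (Lsq (f1, f2))) f1
      = Hdot_inner 0 (\<lambda>y. nderiv (Suc n) f2 y - of_real y * nderiv (Suc (Suc n)) f1 y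
                          - of_real (n + 1) * nderiv (Suc n) f1 y) (nderiv (Suc n) f1)"
    unfolding Hdot_inner_def nderiv.simps(1)
    by (rule integral_cong) (simp add: nderiv_Lsq_fst f1 f2)
  moreover have "Hdot_inner n (snd (Lsq (f1, f2))) f2
      = Hdot_inner 0 (\<lambda>y. nderiv (Suc (Suc n)) f1 y - of_real y * nderiv (Suc n) f2 y
                          - of_real (n + 1) * nderiv n f2 y) (nderiv n f2)"
    unfolding Hdot_inner_def nderiv.simps(1)
    by (rule integral_cong) (simp add: nderiv_Lsq_snd f1 f2)
  ultimately show ?thesis
    unfolding Hdot_inner_nderiv[of "Suc n" f1] Hdot_inner_nderiv[of n f2]
    using transport_energy_identity[OF has_vector_derivative_nderiv[OF f1] has_vector_derivative_nderiv[OF f2]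
        continuous_on_nderiv[OF f1] continuous_on_nderiv[OF f2], of n "Suc n" "n + 1"]
    by simp
qed

lemma Re_diff_mult_cnj_le:
  fixes w z :: complex
  shows "Re ((w - z) * cnj z) - (cmod w)\<^sup>2 / 2 \<le> - (cmod z)\<^sup>2 / 2"
proof -
  have "Re ((w - z) * cnj z) - (cmod w)\<^sup>2 / 2 = - (cmod z)\<^sup>2 / 2 - (cmod (w - z))\<^sup>2 / 2"
    unfolding cmod_power2 by (simp add: power2_eq_square field_simps)
  then show ?thesis
    by simp
qed

lemma normk_power2:
  assumes "smooth_on_I f1" "smooth_on_I f2"
  shows "(normk k (f1, f2))\<^sup>2 = (cmod (f1 (-1)))\<^sup>2 + Re (Hdot_inner 1 f1 f1) + Re (Hdot_inner 0 f2 f2)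
      + Re (Hdot_inner (Suc k) f1 f1) + Re (Hdot_inner k f2 f2)"
  using Re_Hdot_inner_self_nonneg[OF assms(1), of 1] Re_Hdot_inner_self_nonneg[OF assms(2), of 0]
    Re_Hdot_inner_self_nonneg[OF assms(1), of "Suc k"] Re_Hdot_inner_self_nonneg[OF assms(2), of k]
  unfolding cmod_power2 by (simp add: normk_def innerk_def inner0_def power2_eq_square)

theorem lemma5p2:
  fixes k :: nat and f1 f2 :: "real \<Rightarrow> complex"
  assumes "k \<ge> 1"
    and "smooth_on_I f1" and "smooth_on_I f2"
  shows "Re (innerk k (Lsq (f1, f2)) (f1, f2)) \<le> - (1/2) * (normk k (f1, f2))\<^sup>2"
proof -
  note f1 = \<open>smooth_on_I f1\<close> and f2 = \<open>smooth_on_I f2\<close>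
  have point: "Re (fst (Lsq (f1, f2)) (-1) * cnj (f1 (-1))) - (cmod (nderiv 1 f1 (-1) + f2 (-1)))\<^sup>2 / 2
      \<le> - (cmod (f1 (-1)))\<^sup>2 / 2"
    using Re_diff_mult_cnj_le[of "nderiv 1 f1 (-1) + f2 (-1)" "f1 (-1)"] by (simp add: Lsq_def algebra_simps)
  have "(Re (Hdot_inner (Suc k) f1 f1) + Re (Hdot_inner k f2 f2)) / 2
      \<le> (real k + 1/2) * (Re (Hdot_inner (Suc k) f1 f1) + Re (Hdot_inner k f2 f2))"
    using Re_Hdot_inner_self_nonneg[OF f1, of "Suc k"] Re_Hdot_inner_self_nonneg[OF f2, of k]
    by (simp add: algebra_simps)
  moreover have "Re (innerk k (Lsq (f1, f2)) (f1, f2)) = Re (fst (Lsq (f1, f2)) (-1) * cnj (f1 (-1)))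
      + (Re (Hdot_inner 1 (fst (Lsq (f1, f2))) f1) + Re (Hdot_inner 0 (snd (Lsq (f1, f2))) f2))
      + (Re (Hdot_inner (Suc k) (fst (Lsq (f1, f2))) f1) + Re (Hdot_inner k (snd (Lsq (f1, f2))) f2))"
    by (simp add: innerk_def inner0_def)
  ultimately have "Re (innerk k (Lsq (f1, f2)) (f1, f2)) \<le> - (cmod (f1 (-1)))\<^sup>2 / 2
      - (Re (Hdot_inner 1 f1 f1) + Re (Hdot_inner 0 f2 f2)) / 2
      - (Re (Hdot_inner (Suc k) f1 f1) + Re (Hdot_inner k f2 f2)) / 2"
    using Re_Hdot_inner_Lsq[OF f1 f2, of 0, unfolded One_nat_def[symmetric] nderiv.simps(1) of_nat_0 add_0_left]
      Re_Hdot_inner_Lsq[OF f1 f2, of k] point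
      zero_le_power2[of "cmod (nderiv 1 f1 1 - f2 1)"]
      zero_le_power2[of "cmod (nderiv (Suc k) f1 1 - nderiv k f2 1)"]
      zero_le_power2[of "cmod (nderiv (Suc k) f1 (-1) + nderiv k f2 (-1))"]
    by linarith
  then show ?thesis
    using normk_power2[OF f1 f2, of k] by argo
qed

end
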